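(* Let $\mathcal{M}$ be a matroid on $[n]$, $\ell$ an integer, and $\gamma$ an $\ell$-cover of $\mathcal{M}$. Let $F$ be a focal basis of $\gamma$ and let $G\in\mathcal{B}(\mathcal{M})$. Then: (1) For any $A\subseteq F-G$ and any $B\subseteq G-F$ such that $(F-A)\cup B\in\mathcal{B}(\mathcal{M})$, we have $\gamma(A)\leq\gamma(B)$, and if $A\subseteq\operatorname{supp}\gamma$ then $B\subseteq\operatorname{supp}\gamma$. (2) For any bijection $\sigma:F-G\to G-F$ such that $(F-i)\cup\sigma(i)\in\mathcal{B}(\mathcal{M})$ for every $i\in F-G$ (such a bijection always exists), we have $\gamma(i)\leq\gamma(\sigma(i))$ for all $i\in F-G$. Suppose moreover that $G$ is also a focal basis of $\gamma$. Then: (3) If $A,B$ are as in (1) and additionally $(G-B)\cup A\in\mathcal{B}(\mathcal{M})$, then $\gamma(A)=\gamma(B)$, and $A\subseteq\operatorname{supp}\gamma$ if and only if $B\subseteq\operatorname{supp}\gamma$. (4) For $\sigma$ as in (2), $\gamma(i)=\gamma(\sigma(i))$ for all $i\in F-G$.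
   Context: $\mathcal{B}(\mathcal{M})$ is the set of bases of $\mathcal{M}$. For $\gamma:[n]\to\mathbb{N}_0$ and $S\subseteq[n]$, $\gamma(S)=\sum_{i\in S}\gamma(i)$ and $\operatorname{supp}\gamma=\{i:\gamma(i)>0\}$. $\gamma$ is an $\ell$-cover of $\mathcal{M}$ if $\gamma(F)\geq\ell$ for every basis $F$. A basis $F$ is a focal basis of $\gamma$ if $\gamma(F)=\ell$. *)

theory Defs
  imports Main
begin

definition matroid_bases :: "nat \<Rightarrow> nat set set \<Rightarrow> bool" where
  "matroid_bases n \<B> \<longleftrightarrow>
     \<B> \<noteq> {} \<and> (\<forall>F\<in>\<B>. F \<subseteq> {1..n}) \<and>
     (\<forall>F\<in>\<B>. \<forall>G\<in>\<B>. \<forall>x\<in>F - G. \<exists>y\<in>G - F. insert y (F - {x}) \<in> \<B>)"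

definition wt :: "(nat \<Rightarrow> nat) \<Rightarrow> nat set \<Rightarrow> nat" where
  "wt \<gamma> S = (\<Sum>i\<in>S. \<gamma> i)"

definition supp :: "nat \<Rightarrow> (nat \<Rightarrow> nat) \<Rightarrow> nat set" where
  "supp n \<gamma> = {i \<in> {1..n}. 0 < \<gamma> i}"

definition is_cover :: "nat set set \<Rightarrow> int \<Rightarrow> (nat \<Rightarrow> nat) \<Rightarrow> bool" where
  "is_cover \<B> l \<gamma> \<longleftrightarrow> (\<forall>F\<in>\<B>. int (wt \<gamma> F) \<ge> l)"

definition focal_basis :: "nat set set \<Rightarrow> int \<Rightarrow> (nat \<Rightarrow> nat) \<Rightarrow> nat set \<Rightarrow> bool" where
  "focal_basis \<B> l \<gamma> F \<longleftrightarrow> F \<in> \<B> \<and> int (wt \<gamma> F) = l"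

end

theory Submission
  imports Defs
begin

(* Replacing A by B in the focal basis F gives a basis, whose weight is at least l = gamma(F);
   hence gamma(A) <= gamma(B). An element b of B can be exchanged back into F only against some
   a in A, so the one-element case gives gamma(b) >= gamma(a) > 0 when A lies in the support.
   A bijection sigma as in (2) exists by Hall's theorem: exchanging the elements of S <= F - G one
   at a time yields |S| elements of G - F, each of which can be exchanged into F against an element
   of S. If G is focal as well, (1) also holds with F and G swapped, and gamma(F - G) = gamma(G - F)
   turns the pointwise inequalities gamma(i) <= gamma(sigma i) into equalities. *)

lemma inj_on_if_disjoint_images:
  assumes f: "inj_on f S" and g: "inj_on g (A - S)" and "f ` S \<subseteq> U" "g ` (A - S) \<inter> U = {}"
  shows "inj_on (\<lambda>x. if x \<in> S then f x else g x) A"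
proof (rule inj_onI)
  fix x y assume xy: "x \<in> A" "y \<in> A" and eq: "(if x \<in> S then f x else g x) = (if y \<in> S then f y else g y)"
  have apart: "f a \<noteq> g b" if "a \<in> S" "b \<in> A - S" for a b using assms(3,4) that by blast
  show "x = y"
  proof (cases "x \<in> S"; cases "y \<in> S")
    assume "x \<in> S" "y \<in> S"
    then show ?thesis using eq inj_onD[OF f] by simp
  next
    assume "x \<notin> S" "y \<notin> S"
    then show ?thesis using eq xy inj_onD[OF g] by simp
  qed (use eq xy apart in \<open>auto simp: eq_commute\<close>)
qed

lemma Hall_condition_Diff_critical:
  fixes N :: "'a \<Rightarrow> 'b set"
  assumes fin: "finite A" "\<forall>x\<in>A. finite (N x)"
    and hall: "\<forall>T\<subseteq>A. card T \<le> card (\<Union>(N ` T))"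
    and S: "S \<subseteq> A" "card (\<Union>(N ` S)) = card S"
  shows "\<forall>T\<subseteq>A - S. card T \<le> card (\<Union>((\<lambda>x. N x - \<Union>(N ` S)) ` T))"
proof (intro allI impI)
  fix T assume T: "T \<subseteq> A - S"
  define U where "U = \<Union>(N ` S)"
  have "finite S" "finite T" using fin(1) S T by (auto intro: finite_subset)
  have fin_ST: "finite (\<Union>(N ` (S \<union> T)))" using fin S T \<open>finite S\<close> \<open>finite T\<close> by auto
  have U_sub: "U \<subseteq> \<Union>(N ` (S \<union> T))" by (auto simp: U_def)
  have "card S + card T = card (S \<union> T)"
    using T \<open>finite S\<close> \<open>finite T\<close> by (intro card_Un_disjoint[symmetric]) auto
  also have "\<dots> \<le> card (\<Union>(N ` (S \<union> T)))" by (rule hall[rule_format]) (use S T in auto)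
  also have "\<dots> = card (\<Union>(N ` (S \<union> T)) - U) + card U"
    using card_Diff_subset[OF finite_subset[OF U_sub fin_ST] U_sub] card_mono[OF fin_ST U_sub]
    by linarith
  also have "\<Union>(N ` (S \<union> T)) - U = \<Union>((\<lambda>x. N x - U) ` T)" by (auto simp: U_def)
  finally show "card T \<le> card (\<Union>((\<lambda>x. N x - \<Union>(N ` S)) ` T))"
    using S(2) by (simp add: U_def)
qed

lemma Hall_condition_Diff_singleton:
  fixes N :: "'a \<Rightarrow> 'b set"
  assumes slack: "\<forall>T\<subseteq>A. T \<noteq> {} \<longrightarrow> T \<noteq> A \<longrightarrow> card T < card (\<Union>(N ` T))" and "a \<in> A"
  shows "\<forall>T\<subseteq>A - {a}. card T \<le> card (\<Union>((\<lambda>x. N x - {y}) ` T))"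
proof (intro allI impI)
  fix T assume T: "T \<subseteq> A - {a}"
  have "\<Union>((\<lambda>x. N x - {y}) ` T) = \<Union>(N ` T) - {y}" by auto
  moreover have "T = {} \<or> card T < card (\<Union>(N ` T))" using slack T \<open>a \<in> A\<close> by blast
  ultimately show "card T \<le> card (\<Union>((\<lambda>x. N x - {y}) ` T))"
    by (auto simp: card_Diff_singleton_if)
qed

theorem Hall_marriage:
  fixes N :: "'a \<Rightarrow> 'b set"
  assumes "finite A" "\<forall>x\<in>A. finite (N x)" "\<forall>S\<subseteq>A. card S \<le> card (\<Union>(N ` S))"
  shows "\<exists>f. inj_on f A \<and> (\<forall>x\<in>A. f x \<in> N x)"
  using assms
proof (induction "card A" arbitrary: A N rule: less_induct)
  case less
  note fin = less.prems(1,2) and hall = less.prems(3)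
  \<comment> \<open>Halmos-Vaughan: a nonempty proper subset with exactly as many neighbours as elements is
    matched on its own and the rest avoids those neighbours; if there is none, every edge
    a--y can be used first.\<close>
  consider (empty) "A = {}"
    | (critical) S where "S \<subseteq> A" "S \<noteq> {}" "S \<noteq> A" "card (\<Union>(N ` S)) = card S"
    | (slack) a where "a \<in> A" "\<forall>S\<subseteq>A. S \<noteq> {} \<longrightarrow> S \<noteq> A \<longrightarrow> card S < card (\<Union>(N ` S))"
    by (metis hall le_neq_implies_less ex_in_conv)
  then show ?case
  proof cases
    case empty
    then show ?thesis by simp
  next
    case critical
    define U where "U = \<Union>(N ` S)"
    have "finite S" using critical(1) fin(1) by (rule finite_subset)
    have "card S < card A" "card (A - S) < card A"
      using critical(1-3) fin(1) by (auto intro!: psubset_card_mono)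
    have "\<exists>f. inj_on f S \<and> (\<forall>x\<in>S. f x \<in> N x)"
      by (rule less.hyps[OF \<open>card S < card A\<close> \<open>finite S\<close>]) (use fin hall critical(1) in auto)
    then obtain f where f: "inj_on f S" "\<forall>x\<in>S. f x \<in> N x" by blast
    have "\<exists>g. inj_on g (A - S) \<and> (\<forall>x\<in>A - S. g x \<in> N x - U)"
      by (rule less.hyps[OF \<open>card (A - S) < card A\<close>])
        (use fin Hall_condition_Diff_critical[OF fin hall critical(1,4)] in \<open>auto simp: U_def\<close>)
    then obtain g where g: "inj_on g (A - S)" "\<forall>x\<in>A - S. g x \<in> N x - U" by blast
    have "inj_on (\<lambda>x. if x \<in> S then f x else g x) A"
      using f g by (intro inj_on_if_disjoint_images[where U = U]) (auto simp: U_def)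
    then show ?thesis using f g by (intro exI[of _ "\<lambda>x. if x \<in> S then f x else g x"]) auto
  next
    case slack
    have "card {a} \<le> card (N a)" using hall[rule_format, of "{a}"] slack(1) by simp
    then obtain y where "y \<in> N a" by fastforce
    have "card (A - {a}) < card A" by (rule card_Diff1_less[OF fin(1) slack(1)])
    have "\<exists>g. inj_on g (A - {a}) \<and> (\<forall>x\<in>A - {a}. g x \<in> N x - {y})"
      by (rule less.hyps[OF \<open>card (A - {a}) < card A\<close>])
        (use fin Hall_condition_Diff_singleton[OF slack(2,1)] in auto)
    then obtain g where g: "inj_on g (A - {a})" "\<forall>x\<in>A - {a}. g x \<in> N x - {y}" by blast
    have "inj_on (g(a := y)) (A - {a})" "y \<notin> (g(a := y)) ` (A - {a})"
      using g by (auto simp: inj_on_def)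
    then have "inj_on (g(a := y)) A"
      using slack(1) inj_on_insert[of "g(a := y)" a "A - {a}"] by (simp add: insert_absorb)
    then show ?thesis using g \<open>y \<in> N a\<close> by (intro exI[of _ "g(a := y)"]) auto
  qed
qed


lemma matroid_bases_subset:
  assumes "matroid_bases n \<B>" "F \<in> \<B>"
  shows "F \<subseteq> {1..n}"
  using assms by (auto simp: matroid_bases_def)

lemma matroid_bases_finite:
  assumes "matroid_bases n \<B>" "F \<in> \<B>"
  shows "finite F"
  using matroid_bases_subset[OF assms] by (rule finite_subset) simp

lemma matroid_bases_exchange:
  assumes "matroid_bases n \<B>" "F \<in> \<B>" "G \<in> \<B>" "x \<in> F - G"
  shows "\<exists>y\<in>G - F. insert y (F - {x}) \<in> \<B>"
  using assms unfolding matroid_bases_def by blast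

lemma matroid_bases_exchange_into:
  assumes M: "matroid_bases n \<B>" and F: "F \<in> \<B>" and H: "H \<in> \<B>" and b: "b \<in> H - F"
  shows "\<exists>x\<in>F - H. insert b (F - {x}) \<in> \<B>"
  using H b
  \<comment> \<open>Exchange the elements of H - F other than b into F until H - F = {b}.\<close>
proof (induction "card (H - F)" arbitrary: H rule: less_induct)
  case less
  show ?case
  proof (cases "H - F = {b}")
    case True
    obtain x where x: "x \<in> F - H"
      using matroid_bases_exchange[OF M less.prems(1) F less.prems(2)] by auto
    with True show ?thesis using matroid_bases_exchange[OF M F less.prems(1) x] by auto
  next
    case False
    then obtain c where c: "c \<in> H - F" "c \<noteq> b" using less.prems(2) by blast
    then obtain y where y: "y \<in> F - H" and H': "insert y (H - {c}) \<in> \<B>"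
      using matroid_bases_exchange[OF M less.prems(1) F] by blast
    have H'_diff: "insert y (H - {c}) - F = (H - F) - {c}" using y by auto
    have "card (insert y (H - {c}) - F) < card (H - F)"
      unfolding H'_diff using c matroid_bases_finite[OF M less.prems(1)] by (intro card_Diff1_less) auto
    moreover have "b \<in> insert y (H - {c}) - F" using c less.prems(2) H'_diff by auto
    ultimately obtain x where "x \<in> F - insert y (H - {c})" "insert b (F - {x}) \<in> \<B>"
      using less.hyps H' by blast
    then show ?thesis using c(1) by auto
  qed
qed

lemma matroid_bases_multiple_exchange:
  assumes M: "matroid_bases n \<B>" and F: "F \<in> \<B>" and G: "G \<in> \<B>" and S: "S \<subseteq> F - G"
  shows "\<exists>Y\<subseteq>G - F. card Y = card S \<and> (F - S) \<union> Y \<in> \<B>"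
proof -
  have "finite S" using matroid_bases_finite[OF M F] by (rule finite_subset[OF S, OF finite_Diff])
  from this S show ?thesis
  proof (induction S rule: finite_induct)
    case empty
    show ?case using F by (intro exI[of _ "{}"]) simp
  next
    case (insert x S)
    then obtain Y where Y: "Y \<subseteq> G - F" "card Y = card S" "(F - S) \<union> Y \<in> \<B>" by blast
    have x: "x \<in> F - G" "x \<notin> S" "x \<notin> Y" using insert.prems insert.hyps(2) Y(1) by auto
    then obtain y where y: "y \<in> G - ((F - S) \<union> Y)" and H: "insert y (((F - S) \<union> Y) - {x}) \<in> \<B>"
      using matroid_bases_exchange[OF M Y(3) G, of x] by blast
    have "insert y (((F - S) \<union> Y) - {x}) = (F - insert x S) \<union> insert y Y"
      using x by blast
    moreover have "insert y Y \<subseteq> G - F" using Y(1) y insert.prems by blast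
    moreover have "card (insert y Y) = card (insert x S)"
      using y x(2) Y(2) insert.hyps(1) finite_subset[OF Y(1)] matroid_bases_finite[OF M G] by simp
    ultimately show ?case using H by metis
  qed
qed

lemma card_matroid_bases_diff_eq:
  assumes M: "matroid_bases n \<B>" and F: "F \<in> \<B>" and G: "G \<in> \<B>"
  shows "card (F - G) = card (G - F)"
proof -
  have "card (F - G) \<le> card (G - F)" if FG: "F \<in> \<B>" "G \<in> \<B>" for F G
  proof -
    obtain Y where "Y \<subseteq> G - F" "card Y = card (F - G)"
      using matroid_bases_multiple_exchange[OF M FG order.refl] by blast
    then show ?thesis using matroid_bases_finite[OF M \<open>G \<in> \<B>\<close>] by (metis card_mono finite_Diff)
  qed
  then show ?thesis using F G by (simp add: le_antisym)
qed

lemma matroid_bases_exchange_Hall_condition: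
  assumes M: "matroid_bases n \<B>" and F: "F \<in> \<B>" and G: "G \<in> \<B>" and S: "S \<subseteq> F - G"
  shows "card S \<le> card (\<Union>x\<in>S. {y \<in> G - F. insert y (F - {x}) \<in> \<B>})"
proof -
  obtain Y where Y: "Y \<subseteq> G - F" "card Y = card S" "(F - S) \<union> Y \<in> \<B>"
    using matroid_bases_multiple_exchange[OF M F G S] by blast
  have sub: "Y \<subseteq> (\<Union>x\<in>S. {y \<in> G - F. insert y (F - {x}) \<in> \<B>})"
  proof
    fix y assume "y \<in> Y"
    then obtain x where "x \<in> F - ((F - S) \<union> Y)" "insert y (F - {x}) \<in> \<B>"
      using matroid_bases_exchange_into[OF M F Y(3)] Y(1) by blast
    then show "y \<in> (\<Union>x\<in>S. {y \<in> G - F. insert y (F - {x}) \<in> \<B>})" using \<open>y \<in> Y\<close> Y(1) by blast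
  qed
  have fin: "finite (\<Union>x\<in>S. {y \<in> G - F. insert y (F - {x}) \<in> \<B>})"
    using matroid_bases_finite[OF M G] by (rule finite_subset[rotated]) blast
  show ?thesis using card_mono[OF fin sub] Y(2) by simp
qed

lemma matroid_bases_bij_exchange:
  assumes M: "matroid_bases n \<B>" and F: "F \<in> \<B>" and G: "G \<in> \<B>"
  shows "\<exists>\<sigma>. bij_betw \<sigma> (F - G) (G - F) \<and> (\<forall>i\<in>F - G. insert (\<sigma> i) (F - {i}) \<in> \<B>)"
proof -
  define N where "N x = {y \<in> G - F. insert y (F - {x}) \<in> \<B>}" for x
  have "\<exists>\<sigma>. inj_on \<sigma> (F - G) \<and> (\<forall>x\<in>F - G. \<sigma> x \<in> N x)"
  proof (rule Hall_marriage)
    show "finite (F - G)" using matroid_bases_finite[OF M F] by simp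
    show "\<forall>x\<in>F - G. finite (N x)" using matroid_bases_finite[OF M G] by (simp add: N_def)
    show "\<forall>S\<subseteq>F - G. card S \<le> card (\<Union>(N ` S))"
      using matroid_bases_exchange_Hall_condition[OF M F G] by (simp add: N_def)
  qed
  then obtain \<sigma> where \<sigma>: "inj_on \<sigma> (F - G)" "\<forall>x\<in>F - G. \<sigma> x \<in> N x" by blast
  have "\<sigma> ` (F - G) = G - F"
  proof (rule card_subset_eq)
    show "finite (G - F)" using matroid_bases_finite[OF M G] by simp
    show "\<sigma> ` (F - G) \<subseteq> G - F" using \<sigma>(2) by (auto simp: N_def)
    show "card (\<sigma> ` (F - G)) = card (G - F)"
      using card_image[OF \<sigma>(1)] card_matroid_bases_diff_eq[OF M F G] by simp
  qed
  then show ?thesis using \<sigma> by (auto simp: N_def bij_betw_def)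
qed

lemma wt_focal_basis_exchange_le:
  assumes M: "matroid_bases n \<B>" and cov: "is_cover \<B> l \<gamma>" and foc: "focal_basis \<B> l \<gamma> F"
    and A: "A \<subseteq> F" and B: "B \<inter> F = {}" and H: "(F - A) \<union> B \<in> \<B>"
  shows "wt \<gamma> A \<le> wt \<gamma> B"
proof -
  have "finite F" using foc matroid_bases_finite[OF M] by (simp add: focal_basis_def)
  have "finite B" using matroid_bases_finite[OF M H] by simp
  have "wt \<gamma> F = wt \<gamma> (F - A) + wt \<gamma> A"
    unfolding wt_def using \<open>finite F\<close> A by (simp add: sum.subset_diff)
  moreover have "wt \<gamma> ((F - A) \<union> B) = wt \<gamma> (F - A) + wt \<gamma> B"
    unfolding wt_def using \<open>finite F\<close> \<open>finite B\<close> B by (subst sum.union_disjoint) auto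
  moreover have "int (wt \<gamma> F) = l" using foc by (simp add: focal_basis_def)
  moreover have "l \<le> int (wt \<gamma> ((F - A) \<union> B))" using cov H by (simp add: is_cover_def)
  ultimately show ?thesis by linarith
qed

lemma focal_basis_exchange_single_le:
  assumes M: "matroid_bases n \<B>" and cov: "is_cover \<B> l \<gamma>" and foc: "focal_basis \<B> l \<gamma> F"
    and "x \<in> F" "y \<notin> F" "insert y (F - {x}) \<in> \<B>"
  shows "\<gamma> x \<le> \<gamma> y"
  using wt_focal_basis_exchange_le[OF M cov foc, of "{x}" "{y}"] assms(4-) by (simp add: wt_def)

lemma focal_basis_exchange_supp:
  assumes M: "matroid_bases n \<B>" and cov: "is_cover \<B> l \<gamma>" and foc: "focal_basis \<B> l \<gamma> F"
    and A: "A \<subseteq> F" and B: "B \<inter> F = {}" and H: "(F - A) \<union> B \<in> \<B>" and supp: "A \<subseteq> supp n \<gamma>"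
  shows "B \<subseteq> supp n \<gamma>"
proof
  fix b assume "b \<in> B"
  have F: "F \<in> \<B>" using foc by (simp add: focal_basis_def)
  obtain x where x: "x \<in> F - ((F - A) \<union> B)" "insert b (F - {x}) \<in> \<B>"
    using matroid_bases_exchange_into[OF M F H] \<open>b \<in> B\<close> B by blast
  then have "x \<in> A" by blast
  then have "0 < \<gamma> x" using supp by (auto simp: supp_def)
  also have "\<gamma> x \<le> \<gamma> b"
    using focal_basis_exchange_single_le[OF M cov foc] x \<open>b \<in> B\<close> B by blast
  finally show "b \<in> supp n \<gamma>"
    using matroid_bases_subset[OF M H] \<open>b \<in> B\<close> by (auto simp: supp_def)
qed

lemma wt_focal_bases_diff_eq:
  assumes M: "matroid_bases n \<B>" and F: "focal_basis \<B> l \<gamma> F" and G: "focal_basis \<B> l \<gamma> G"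
  shows "wt \<gamma> (F - G) = wt \<gamma> (G - F)"
proof -
  have "finite F" "finite G" using F G matroid_bases_finite[OF M] by (auto simp: focal_basis_def)
  have "wt \<gamma> F = wt \<gamma> (F \<inter> G) + wt \<gamma> (F - G)"
    unfolding wt_def using \<open>finite F\<close> by (rule sum.Int_Diff)
  moreover have "wt \<gamma> G = wt \<gamma> (G \<inter> F) + wt \<gamma> (G - F)"
    unfolding wt_def using \<open>finite G\<close> by (rule sum.Int_Diff)
  moreover have "G \<inter> F = F \<inter> G" by blast
  moreover have "int (wt \<gamma> F) = l" "int (wt \<gamma> G) = l" using F G by (simp_all add: focal_basis_def)
  ultimately show ?thesis by (metis add_left_cancel of_nat_eq_iff)
qed

lemma focal_bases_bij_exchange_eq:
  assumes M: "matroid_bases n \<B>" and cov: "is_cover \<B> l \<gamma>"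
    and F: "focal_basis \<B> l \<gamma> F" and G: "focal_basis \<B> l \<gamma> G"
    and \<sigma>: "bij_betw \<sigma> (F - G) (G - F)" and exch: "\<forall>i\<in>F - G. insert (\<sigma> i) (F - {i}) \<in> \<B>"
    and i: "i \<in> F - G"
  shows "\<gamma> i = \<gamma> (\<sigma> i)"
proof -
  have "sum \<gamma> (F - G) = sum \<gamma> (G - F)"
    using wt_focal_bases_diff_eq[OF M F G] by (simp add: wt_def)
  also have "\<dots> = (\<Sum>j\<in>F - G. \<gamma> (\<sigma> j))" by (simp add: sum.reindex_bij_betw[OF \<sigma>])
  finally have "sum \<gamma> (F - G) = (\<Sum>j\<in>F - G. \<gamma> (\<sigma> j))" .
  moreover have "\<gamma> j \<le> \<gamma> (\<sigma> j)" if "j \<in> F - G" for j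
    using focal_basis_exchange_single_le[OF M cov F] that exch bij_betwE[OF \<sigma>] by blast
  moreover have "finite (F - G)" using F matroid_bases_finite[OF M] by (simp add: focal_basis_def)
  ultimately show ?thesis by (rule sum_mono_inv[OF _ _ i])
qed

lemma focal_basis_exchange:
  assumes M: "matroid_bases n \<B>" and cov: "is_cover \<B> l \<gamma>" and foc: "focal_basis \<B> l \<gamma> F"
  shows "\<forall>A B. A \<subseteq> F - G \<and> B \<subseteq> G - F \<and> (F - A) \<union> B \<in> \<B> \<longrightarrow>
    wt \<gamma> A \<le> wt \<gamma> B \<and> (A \<subseteq> supp n \<gamma> \<longrightarrow> B \<subseteq> supp n \<gamma>)"
proof (intro allI impI)
  fix A B assume "A \<subseteq> F - G \<and> B \<subseteq> G - F \<and> (F - A) \<union> B \<in> \<B>"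
  then have "A \<subseteq> F" "B \<inter> F = {}" "(F - A) \<union> B \<in> \<B>" by auto
  then show "wt \<gamma> A \<le> wt \<gamma> B \<and> (A \<subseteq> supp n \<gamma> \<longrightarrow> B \<subseteq> supp n \<gamma>)"
    using wt_focal_basis_exchange_le[OF M cov foc] focal_basis_exchange_supp[OF M cov foc] by simp
qed

lemma focal_bases_exchange:
  assumes M: "matroid_bases n \<B>" and cov: "is_cover \<B> l \<gamma>"
    and F: "focal_basis \<B> l \<gamma> F" and G: "focal_basis \<B> l \<gamma> G"
  shows "\<forall>A B. A \<subseteq> F - G \<and> B \<subseteq> G - F \<and> (F - A) \<union> B \<in> \<B> \<and> (G - B) \<union> A \<in> \<B> \<longrightarrow>
    wt \<gamma> A = wt \<gamma> B \<and> (A \<subseteq> supp n \<gamma> \<longleftrightarrow> B \<subseteq> supp n \<gamma>)"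
proof (intro allI impI)
  fix A B assume AB: "A \<subseteq> F - G \<and> B \<subseteq> G - F \<and> (F - A) \<union> B \<in> \<B> \<and> (G - B) \<union> A \<in> \<B>"
  have "wt \<gamma> A \<le> wt \<gamma> B \<and> (A \<subseteq> supp n \<gamma> \<longrightarrow> B \<subseteq> supp n \<gamma>)"
    using focal_basis_exchange[OF M cov F, of G, rule_format, of A B] AB by blast
  moreover have "wt \<gamma> B \<le> wt \<gamma> A \<and> (B \<subseteq> supp n \<gamma> \<longrightarrow> A \<subseteq> supp n \<gamma>)"
    using focal_basis_exchange[OF M cov G, of F, rule_format, of B A] AB by blast
  ultimately show "wt \<gamma> A = wt \<gamma> B \<and> (A \<subseteq> supp n \<gamma> \<longleftrightarrow> B \<subseteq> supp n \<gamma>)"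
    using le_antisym by blast
qed

theorem lemma3p3:
  fixes n :: nat and \<B> :: "nat set set" and l :: int and \<gamma> :: "nat \<Rightarrow> nat"
    and F G :: "nat set"
  assumes M: "matroid_bases n \<B>"
    and cov: "is_cover \<B> l \<gamma>"
    and foc: "focal_basis \<B> l \<gamma> F"
    and G: "G \<in> \<B>"
  shows
    "(\<forall>A B. A \<subseteq> F - G \<and> B \<subseteq> G - F \<and> (F - A) \<union> B \<in> \<B> \<longrightarrow>
        wt \<gamma> A \<le> wt \<gamma> B \<and> (A \<subseteq> supp n \<gamma> \<longrightarrow> B \<subseteq> supp n \<gamma>))
   \<and> (\<exists>\<sigma>. bij_betw \<sigma> (F - G) (G - F) \<and> (\<forall>i\<in>F - G. insert (\<sigma> i) (F - {i}) \<in> \<B>))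
   \<and> (\<forall>\<sigma>. bij_betw \<sigma> (F - G) (G - F) \<and> (\<forall>i\<in>F - G. insert (\<sigma> i) (F - {i}) \<in> \<B>) \<longrightarrow>
        (\<forall>i\<in>F - G. \<gamma> i \<le> \<gamma> (\<sigma> i)))
   \<and> (focal_basis \<B> l \<gamma> G \<longrightarrow>
        (\<forall>A B. A \<subseteq> F - G \<and> B \<subseteq> G - F \<and> (F - A) \<union> B \<in> \<B> \<and> (G - B) \<union> A \<in> \<B> \<longrightarrow>
           wt \<gamma> A = wt \<gamma> B \<and> (A \<subseteq> supp n \<gamma> \<longleftrightarrow> B \<subseteq> supp n \<gamma>))
      \<and> (\<forall>\<sigma>. bij_betw \<sigma> (F - G) (G - F) \<and> (\<forall>i\<in>F - G. insert (\<sigma> i) (F - {i}) \<in> \<B>) \<longrightarrow>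
           (\<forall>i\<in>F - G. \<gamma> i = \<gamma> (\<sigma> i))))"
proof -
  have F: "F \<in> \<B>" using foc by (simp add: focal_basis_def)
  have single_le: "\<forall>\<sigma>. bij_betw \<sigma> (F - G) (G - F) \<and> (\<forall>i\<in>F - G. insert (\<sigma> i) (F - {i}) \<in> \<B>) \<longrightarrow>
      (\<forall>i\<in>F - G. \<gamma> i \<le> \<gamma> (\<sigma> i))"
    using focal_basis_exchange_single_le[OF M cov foc] bij_betwE by blast
  have single_eq: "\<forall>\<sigma>. bij_betw \<sigma> (F - G) (G - F) \<and> (\<forall>i\<in>F - G. insert (\<sigma> i) (F - {i}) \<in> \<B>) \<longrightarrow>
      (\<forall>i\<in>F - G. \<gamma> i = \<gamma> (\<sigma> i))"
    if "focal_basis \<B> l \<gamma> G"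
    using focal_bases_bij_exchange_eq[OF M cov foc that] by blast
  show ?thesis
    by (intro conjI impI focal_basis_exchange[OF M cov foc] matroid_bases_bij_exchange[OF M F G]
        single_le focal_bases_exchange[OF M cov foc] single_eq)
qed

end
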